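(* Let $\mathcal{A}$ be a totally negative $2$-Calabi–Yau Abelian category. Then the Ext-quiver of any $\Sigma$-collection in $\mathcal{A}$ is the double of a totally negative quiver.
   Context: $\mathcal{A}$ is a $\mathbf{C}$-linear Abelian category with finite-dimensional Ext spaces; it is $2$-Calabi–Yau in the sense that for all objects $M,N$ one has $\operatorname{Ext}^i(M,N)=0$ for $i\notin\{0,1,2\}$ and functorial nondegenerate pairings $\operatorname{Ext}^i(M,N)\otimes\operatorname{Ext}^{2-i}(N,M)\to\mathbf{C}$ (as induced by a right $2$-Calabi–Yau structure on a dg enhancement), so that $\operatorname{ext}^1(M,N)=\operatorname{ext}^1(N,M)$ and $\operatorname{ext}^1(M,M)$ is even. The Euler form is $(M,N)=\sum_i(-1)^i\dim\operatorname{Ext}^i(M,N)$, and $\mathcal{A}$ is totally negative if $(M,N)<0$ for all nonzero $M,N$. An object $\mathcal{F}$ is a $\Sigma$-object if $\dim\operatorname{Ext}^0(\mathcal{F},\mathcal{F})=\dim\operatorname{Ext}^2(\mathcal{F},\mathcal{F})=1$, $\dim\operatorname{Ext}^1(\mathcal{F},\mathcal{F})$ is even and $\operatorname{Ext}^i(\mathcal{F},\mathcal{F})=0$ otherwise; a $\Sigma$-collection is a finite set $\{\mathcal{F}_1,\dots,\mathcal{F}_r\}$ of $\Sigma$-objects with $\operatorname{Hom}(\mathcal{F}_m,\mathcal{F}_n)=0$ for $m\neq n$. Its Ext-quiver has vertices $\mathcal{F}_1,\dots,\mathcal{F}_r$ and $\dim\operatorname{Ext}^1(\mathcal{F}_i,\mathcal{F}_j)$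 arrows from $\mathcal{F}_i$ to $\mathcal{F}_j$. The double of a quiver $Q$ adds an opposite arrow for each arrow; a quiver is totally negative if every vertex carries at least two loops and any two distinct vertices are joined by at least one arrow. *)

theory Defs
  imports Main
begin

text \<open>
  A C-linear Abelian category with finite-dimensional Ext spaces is represented
  through its set of objects Obj and the dimension function
  ext i M N = dim Ext^i(M,N).  The 2-Calabi-Yau property is recorded through its
  numerical consequences: Ext^i vanishes outside i in {0,1,2}, the nondegenerate
  pairing Ext^i(M,N) x Ext^(2-i)(N,M) -> C gives ext i M N = ext (2-i) N M, and
  ext 1 M M is even.
\<close>

definition cy2_category :: "'o set \<Rightarrow> (nat \<Rightarrow> 'o \<Rightarrow> 'o \<Rightarrow> nat) \<Rightarrow> bool" where
  "cy2_category Obj ext \<longleftrightarrow>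
     (\<forall>M\<in>Obj. \<forall>N\<in>Obj. \<forall>i. i > 2 \<longrightarrow> ext i M N = 0) \<and>
     (\<forall>M\<in>Obj. \<forall>N\<in>Obj. \<forall>i\<le>2. ext i M N = ext (2 - i) N M) \<and>
     (\<forall>M\<in>Obj. even (ext 1 M M))"

definition euler_form :: "(nat \<Rightarrow> 'o \<Rightarrow> 'o \<Rightarrow> nat) \<Rightarrow> 'o \<Rightarrow> 'o \<Rightarrow> int" where
  "euler_form ext M N = int (ext 0 M N) - int (ext 1 M N) + int (ext 2 M N)"

text \<open>In an Abelian category M is nonzero iff id_M is nonzero iff Hom(M,M) is nonzero.\<close>
definition nonzero_obj :: "(nat \<Rightarrow> 'o \<Rightarrow> 'o \<Rightarrow> nat) \<Rightarrow> 'o \<Rightarrow> bool" where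
  "nonzero_obj ext M \<longleftrightarrow> ext 0 M M \<noteq> 0"

definition totally_negative_cat :: "'o set \<Rightarrow> (nat \<Rightarrow> 'o \<Rightarrow> 'o \<Rightarrow> nat) \<Rightarrow> bool" where
  "totally_negative_cat Obj ext \<longleftrightarrow>
     (\<forall>M\<in>Obj. \<forall>N\<in>Obj. nonzero_obj ext M \<longrightarrow> nonzero_obj ext N \<longrightarrow> euler_form ext M N < 0)"

definition sigma_object :: "(nat \<Rightarrow> 'o \<Rightarrow> 'o \<Rightarrow> nat) \<Rightarrow> 'o \<Rightarrow> bool" where
  "sigma_object ext F \<longleftrightarrow>
     ext 0 F F = 1 \<and> ext 2 F F = 1 \<and> even (ext 1 F F) \<and> (\<forall>i. i > 2 \<longrightarrow> ext i F F = 0)"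

definition sigma_collection :: "'o set \<Rightarrow> (nat \<Rightarrow> 'o \<Rightarrow> 'o \<Rightarrow> nat) \<Rightarrow> 'o set \<Rightarrow> bool" where
  "sigma_collection Obj ext C \<longleftrightarrow>
     finite C \<and> C \<subseteq> Obj \<and> (\<forall>F\<in>C. sigma_object ext F) \<and>
     (\<forall>F\<in>C. \<forall>G\<in>C. F \<noteq> G \<longrightarrow> ext 0 F G = 0)"

text \<open>A (finite) quiver on vertex set V is given by the number q v w of arrows v -> w.\<close>
definition ext_quiver :: "(nat \<Rightarrow> 'o \<Rightarrow> 'o \<Rightarrow> nat) \<Rightarrow> 'o \<Rightarrow> 'o \<Rightarrow> nat" where
  "ext_quiver ext F G = ext 1 F G"

text \<open>Double of a quiver: one opposite arrow added per arrow (a loop gets an extra loop).\<close>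
definition double_quiver :: "('v \<Rightarrow> 'v \<Rightarrow> nat) \<Rightarrow> 'v \<Rightarrow> 'v \<Rightarrow> nat" where
  "double_quiver q v w = q v w + q w v"

definition totally_negative_quiver :: "'v set \<Rightarrow> ('v \<Rightarrow> 'v \<Rightarrow> nat) \<Rightarrow> bool" where
  "totally_negative_quiver V q \<longleftrightarrow>
     (\<forall>v\<in>V. q v v \<ge> 2) \<and> (\<forall>v\<in>V. \<forall>w\<in>V. v \<noteq> w \<longrightarrow> q v w + q w v \<ge> 1)"

end

theory Submission
  imports Defs
begin

(* Serre duality turns the Euler form of a Sigma-object F into 2 - ext^1(F,F), and that of two
   distinct members of a Sigma-collection into -ext^1(F,G); total negativity therefore forces
   ext^1(F,F) >= 4 and ext^1(F,G) >= 1.  Since ext^1 is symmetric with even diagonal, splitting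
   every pair of opposite arrows along a total order of the vertices and halving the loops
   exhibits the Ext-quiver as a double. *)

lemma cy2_ext1_sym:
  assumes "cy2_category Obj ext" "M \<in> Obj" "N \<in> Obj"
  shows "ext 1 M N = ext 1 N M"
  using assms unfolding cy2_category_def by (metis diff_Suc_1 one_le_numeral Suc_1)

lemma cy2_ext2_eq_hom:
  assumes "cy2_category Obj ext" "M \<in> Obj" "N \<in> Obj"
  shows "ext 2 M N = ext 0 N M"
  using assms unfolding cy2_category_def by (metis diff_self_eq_0 order_refl)

lemma sigma_object_nonzero: "sigma_object ext F \<Longrightarrow> nonzero_obj ext F"
  unfolding sigma_object_def nonzero_obj_def by simp

lemma euler_form_sigma_object:
  "sigma_object ext F \<Longrightarrow> euler_form ext F F = 2 - int (ext 1 F F)"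
  unfolding sigma_object_def euler_form_def by simp

lemma euler_form_hom_orthogonal:
  assumes "cy2_category Obj ext" "M \<in> Obj" "N \<in> Obj" "ext 0 M N = 0" "ext 0 N M = 0"
  shows "euler_form ext M N = - int (ext 1 M N)"
  using assms cy2_ext2_eq_hom[OF assms(1-3)] unfolding euler_form_def by simp

lemma sigma_object_ext1_ge_4:
  assumes "totally_negative_cat Obj ext" "F \<in> Obj" "sigma_object ext F"
  shows "4 \<le> ext 1 F F"
proof -
  have "euler_form ext F F < 0"
    using assms(1,2) sigma_object_nonzero[OF assms(3)] unfolding totally_negative_cat_def by blast
  then have "2 < ext 1 F F"
    using euler_form_sigma_object[OF assms(3)] by simp
  moreover have "even (ext 1 F F)"
    using assms(3) unfolding sigma_object_def by simp
  ultimately show ?thesis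
    by presburger
qed

lemma sigma_collection_ext1_pos:
  assumes "cy2_category Obj ext" "totally_negative_cat Obj ext" "sigma_collection Obj ext C"
    and "F \<in> C" "G \<in> C" "F \<noteq> G"
  shows "1 \<le> ext 1 F G"
proof -
  have FG: "F \<in> Obj" "G \<in> Obj" "sigma_object ext F" "sigma_object ext G"
    and orth: "ext 0 F G = 0" "ext 0 G F = 0"
    using assms(3-6) unfolding sigma_collection_def by auto
  have "euler_form ext F G < 0"
    using assms(2) FG(1,2) sigma_object_nonzero[OF FG(3)] sigma_object_nonzero[OF FG(4)]
    unfolding totally_negative_cat_def by blast
  then show ?thesis
    using euler_form_hom_orthogonal[OF assms(1) FG(1,2) orth] by simp
qed

lemma symmetric_quiver_is_double:
  assumes sym: "\<And>v w. v \<in> V \<Longrightarrow> w \<in> V \<Longrightarrow> p v w = p w v"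
    and even_loops: "\<And>v. v \<in> V \<Longrightarrow> even (p v v)"
  shows "\<exists>q. \<forall>v\<in>V. \<forall>w\<in>V. p v w = double_quiver q v w"
proof -
  obtain r :: "'a rel" where "Well_order r" "Field r = UNIV"
    using well_ordering by iprover
  then have "total_on UNIV r" "antisym r"
    unfolding well_order_on_def linear_order_on_def partial_order_on_def by auto
  define q where "q v w = (if v = w then p v v div 2 else if (v, w) \<in> r then p v w else 0)"
    for v w
  have "p v w = double_quiver q v w" if "v \<in> V" "w \<in> V" for v w
  proof (cases "v = w")
    case True
    then show ?thesis
      using even_loops[OF that(1)] unfolding q_def double_quiver_def by (auto elim: evenE)
  next
    case False
    then have "(v, w) \<in> r \<and> (w, v) \<notin> r \<or> (w, v) \<in> r \<and> (v, w) \<notin> r"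
      using \<open>total_on UNIV r\<close> \<open>antisym r\<close> unfolding total_on_def antisym_def by blast
    then show ?thesis
      using False sym[OF that] unfolding q_def double_quiver_def by auto
  qed
  then show ?thesis
    by blast
qed

lemma totally_negative_quiver_iff_double:
  assumes "\<forall>v\<in>V. \<forall>w\<in>V. p v w = double_quiver q v w"
  shows "totally_negative_quiver V q \<longleftrightarrow>
    (\<forall>v\<in>V. 4 \<le> p v v) \<and> (\<forall>v\<in>V. \<forall>w\<in>V. v \<noteq> w \<longrightarrow> 1 \<le> p v w)"
  using assms unfolding totally_negative_quiver_def double_quiver_def by auto

theorem proposition7p1:
  fixes Obj :: "'o set" and ext :: "nat \<Rightarrow> 'o \<Rightarrow> 'o \<Rightarrow> nat" and C :: "'o set"
  assumes "cy2_category Obj ext"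
    and "totally_negative_cat Obj ext"
    and "sigma_collection Obj ext C"
  shows "\<exists>q :: 'o \<Rightarrow> 'o \<Rightarrow> nat. totally_negative_quiver C q \<and>
           (\<forall>F\<in>C. \<forall>G\<in>C. ext_quiver ext F G = double_quiver q F G)"
proof -
  have C: "C \<subseteq> Obj" "\<And>F. F \<in> C \<Longrightarrow> sigma_object ext F"
    using assms(3) unfolding sigma_collection_def by auto
  have "\<exists>q. \<forall>F\<in>C. \<forall>G\<in>C. ext_quiver ext F G = double_quiver q F G"
  proof (rule symmetric_quiver_is_double)
    show "ext_quiver ext F G = ext_quiver ext G F" if "F \<in> C" "G \<in> C" for F G
      using cy2_ext1_sym[OF assms(1)] C(1) that unfolding ext_quiver_def by blast
    show "even (ext_quiver ext F F)" if "F \<in> C" for F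
      using C(2)[OF that] unfolding sigma_object_def ext_quiver_def by simp
  qed
  then obtain q where double: "\<forall>F\<in>C. \<forall>G\<in>C. ext_quiver ext F G = double_quiver q F G"
    by blast
  have "totally_negative_quiver C q"
    unfolding totally_negative_quiver_iff_double[OF double] ext_quiver_def
    using sigma_object_ext1_ge_4[OF assms(2)] sigma_collection_ext1_pos[OF assms] C by blast
  with double show ?thesis
    by blast
qed

end
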